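(* Let $w_1=a$, $w_2=b$, $w_3=ba$, $w_4=baabbaa$, and $w_n = b\cdot\mathit{TM}_{2n-8}\cdot\overline{\mathit{TM}_{2n-6}}\cdot\overline{\mathit{TM}_{2n-6}}'$ for $n\ge 5$. Then: (1) the infinite concatenation $w_1w_2w_3\cdots$ equals the infinite Thue–Morse word $\mathcal{TM}$, i.e. $\mathcal{TM}=\lim_{n\to\infty} w_1\cdots w_n$; (2) $w_n\preceq w_{n+1}$ for every $n\ge1$; (3) $w_n$ is a Nyldon word for every $n\ge 1$. In particular, $\mathcal{TM}$ admits a factorization into an infinite lexicographically non-decreasing sequence of Nyldon words.
   Context: Strings are over the binary alphabet $\{a,b\}$ ordered by $a \prec b$, and $\prec$ also denotes the induced lexicographic order on strings: $x \prec y$ iff $x$ is a proper prefix of $y$, or there is $i$ with $x[1..i-1]=y[1..i-1]$ and $x[i]\prec y[i]$; $x\preceq y$ means $x\prec y$ or $x=y$. Nyldon words are defined recursively: every string of length $1$ is a Nyldon word; a string $w$ with $|w|\ge 2$ is a Nyldon word iff there is no factorization $w=\gamma_1\cdots\gamma_m$ with $m\ge 2$, each $\gamma_i$ a nonempty Nyldon word, and $\gamma_1\preceq\gamma_2\preceq\cdots\preceq\gamma_m$. For a binary string $w$, $\overline{w}$ is obtained by exchanging $a$ and $b$ letterwise, and $w'$ is $w$ with its last letter removed; $\overline{w}'$ means $(\overline{w})'$. Thue–Morse words: $\mathit{TM}_0=a$ and $\mathit{TM}_k=\mathit{TM}_{k-1}\cdot\overline{\mathit{TM}_{k-1}}$ for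 $k\ge1$; the infinite Thue–Morse word is $\mathcal{TM}=\lim_{k\to\infty}\mathit{TM}_k$ (each $\mathit{TM}_k$ is a prefix of $\mathit{TM}_{k+1}$). *)

theory Defs
  imports Main
begin

datatype letter = A | B   (* A = a, B = b, with a < b *)

fun flip :: "letter \<Rightarrow> letter" where
  "flip A = B" | "flip B = A"

definition cmpl :: "letter list \<Rightarrow> letter list" where
  "cmpl w = map flip w"

fun lex_less :: "letter list \<Rightarrow> letter list \<Rightarrow> bool" where
  "lex_less [] ys = (ys \<noteq> [])"
| "lex_less (x # xs) [] = False"
| "lex_less (x # xs) (y # ys) = ((x = A \<and> y = B) \<or> (x = y \<and> lex_less xs ys))"

definition lex_le :: "letter list \<Rightarrow> letter list \<Rightarrow> bool" where
  "lex_le x y = (lex_less x y \<or> x = y)"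

(* nyl k w : Nyldon-ness for words of length at most k (recursion on the length bound) *)
primrec nyl :: "nat \<Rightarrow> letter list \<Rightarrow> bool" where
  "nyl 0 w = False"
| "nyl (Suc k) w = (length w \<le> Suc k \<and>
     (length w = 1 \<or>
      (length w \<ge> 2 \<and>
       \<not> (\<exists>gs. length gs \<ge> 2 \<and> concat gs = w \<and>
             (\<forall>g\<in>set gs. g \<noteq> [] \<and> nyl k g) \<and>
             (\<forall>i. Suc i < length gs \<longrightarrow> lex_le (gs ! i) (gs ! Suc i))))))"

definition nyldon :: "letter list \<Rightarrow> bool" where
  "nyldon w = nyl (length w) w"

primrec TM :: "nat \<Rightarrow> letter list" where
  "TM 0 = [A]"
| "TM (Suc k) = TM k @ cmpl (TM k)"

(* infinite Thue-Morse word, 0-indexed; TM (Suc i) has length 2^(i+1) > i *)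
definition tm_inf :: "nat \<Rightarrow> letter" where
  "tm_inf i = TM (Suc i) ! i"

definition wn :: "nat \<Rightarrow> letter list" where
  "wn n = (if n = 1 then [A]
           else if n = 2 then [B]
           else if n = 3 then [B, A]
           else if n = 4 then [B, A, A, B, B, A, A]
           else [B] @ TM (2*n - 8) @ cmpl (TM (2*n - 6)) @ butlast (cmpl (TM (2*n - 6))))"

end

theory Submission
  imports Defs
begin

(*
  Every proper Nyldon suffix of a Nyldon word w is lexicographically smaller than w.
  This yields a composition rule: if u is Nyldon and all its proper Nyldon suffixes
  are at most r, and v is a Nyldon word with v < u and r <= v, then uv is Nyldon and
  all its proper Nyldon suffixes are at most v.

  For n >= 5, w_n is the image of abaabbaab under mu^(2(n-4)), mu the Thue-Morse
  morphism, with its final b moved to the front. The same rotation applied to eight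
  short seed words gives words that satisfy the composition rule at every level:
  mu^2 maps each seed to a product of two seeds, so the rule lifts from one level to
  the next, and a finite computation starts the induction. Finally w_1 ... w_(n+4)
  is mu^(2(n+1))(abb) without its last letter, hence a prefix of the Thue-Morse word.
*)

section \<open>Lexicographic order\<close>

lemma lex_less_irrefl: "\<not> lex_less x x"
  by (induct x) auto

lemma lex_less_trans: "lex_less x y \<Longrightarrow> lex_less y z \<Longrightarrow> lex_less x z"
proof (induct x arbitrary: y z)
  case Nil
  then show ?case by (cases y; cases z) auto
next
  case (Cons a x)
  then show ?case by (cases y; cases z) auto
qed

lemma lex_less_linear: "lex_less x y \<or> x = y \<or> lex_less y x"
proof (induct x arbitrary: y)
  case Nil
  then show ?case by (cases y) auto
next
  case (Cons a x)
  show ?case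
  proof (cases y)
    case (Cons b y')
    then show ?thesis using Cons.hyps[of y'] by (cases a; cases b) auto
  qed simp
qed

lemma lex_le_trans: "lex_le x y \<Longrightarrow> lex_le y z \<Longrightarrow> lex_le x z"
  unfolding lex_le_def using lex_less_trans by blast

lemma transp_lex_le: "transp lex_le"
  by (rule transpI) (rule lex_le_trans)

lemma lex_less_le_trans: "lex_less x y \<Longrightarrow> lex_le y z \<Longrightarrow> lex_less x z"
  unfolding lex_le_def using lex_less_trans by blast

lemma not_lex_less_iff: "\<not> lex_less x y \<longleftrightarrow> lex_le y x"
  unfolding lex_le_def using lex_less_linear lex_less_trans lex_less_irrefl by blast

lemma lex_less_append_right: "ys \<noteq> [] \<Longrightarrow> lex_less xs (xs @ ys)"
  by (induct xs) auto

lemma lex_less_append_left_iff [simp]: "lex_less (p @ x) (p @ y) \<longleftrightarrow> lex_less x y"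
  by (induct p) auto

(* lex_less decided at a differing letter rather than by the proper-prefix rule; this is the
   kind of comparison that rot_img preserves. *)
fun mismatch_less :: "letter list \<Rightarrow> letter list \<Rightarrow> bool" where
  "mismatch_less (x # xs) (y # ys) \<longleftrightarrow> x = A \<and> y = B \<or> x = y \<and> mismatch_less xs ys"
| "mismatch_less _ _ \<longleftrightarrow> False"

lemma mismatch_lessE:
  assumes "mismatch_less x y"
  obtains p u v where "x = p @ A # u" "y = p @ B # v"
  using assms
proof (induct x y arbitrary: thesis rule: mismatch_less.induct)
  case (1 a x b y)
  show ?case
  proof (cases "a = A \<and> b = B")
    case True
    then show ?thesis using "1.prems"(1)[of "[]"] by simp
  next
    case False
    then show ?thesis using 1 by (metis append_Cons mismatch_less.simps(1))
  qed
qed auto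

lemma mismatch_less_butlastD: "mismatch_less (butlast x) (butlast y) \<Longrightarrow> mismatch_less x y"
  by (induct x y rule: mismatch_less.induct) (auto split: if_splits)

section \<open>Sorted Nyldon factorizations\<close>

definition nyldon_factorization :: "letter list list \<Rightarrow> bool" where
  "nyldon_factorization gs \<longleftrightarrow> (\<forall>g\<in>set gs. nyldon g) \<and> sorted_wrt lex_le gs"

lemma sorted_wrt_lex_le_iff_nth_Suc:
  "sorted_wrt lex_le gs \<longleftrightarrow> (\<forall>i. Suc i < length gs \<longrightarrow> lex_le (gs ! i) (gs ! Suc i))"
  by (rule sorted_wrt_iff_nth_Suc_transp[OF transp_lex_le])

lemma length_less_concat:
  assumes "2 \<le> length gs" "\<forall>h\<in>set gs. h \<noteq> []" "g \<in> set gs"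
  shows "length g < length (concat gs)"
proof -
  obtain xs ys where gs: "gs = xs @ g # ys" using assms(3) by (meson split_list)
  have "xs @ ys \<noteq> []" using assms(1) gs by auto
  then have "concat (xs @ ys) \<noteq> []" using assms(2) gs by auto
  then show ?thesis using gs by simp
qed

lemma nyl_bound_irrelevant: "length w \<le> k \<Longrightarrow> length w \<le> k' \<Longrightarrow> nyl k w = nyl k' w"
proof (induct k arbitrary: k' w)
  case 0
  then show ?case by (cases k') auto
next
  case (Suc k)
  show ?case
  proof (cases k')
    case 0
    then show ?thesis using Suc.prems by simp
  next
    case (Suc m)
    have "(\<forall>g\<in>set gs. g \<noteq> [] \<and> nyl k g) \<longleftrightarrow> (\<forall>g\<in>set gs. g \<noteq> [] \<and> nyl m g)"
      if "2 \<le> length gs" "concat gs = w" for gs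
      using length_less_concat[OF that(1)] that(2) Suc.hyps Suc.prems \<open>k' = Suc m\<close>
      by (metis less_Suc_eq_le order.strict_trans2)
    then show ?thesis using Suc.prems \<open>k' = Suc m\<close> by (simp only: nyl.simps) blast
  qed
qed

lemma nyl_eq_nyldon: "length w \<le> k \<Longrightarrow> nyl k w = nyldon w"
  unfolding nyldon_def by (rule nyl_bound_irrelevant) simp_all

lemma not_nyldon_Nil [simp]: "\<not> nyldon []"
  by (simp add: nyldon_def)

lemma nyldon_letter: "nyldon [c]"
  by (simp add: nyldon_def)

lemma nyldon_iff:
  "nyldon w \<longleftrightarrow> w \<noteq> [] \<and> \<not> (\<exists>gs. 2 \<le> length gs \<and> concat gs = w \<and> nyldon_factorization gs)"
proof (cases w)
  case Nil
  then show ?thesis by simp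
next
  case (Cons c w')
  have factors: "(\<forall>g\<in>set gs. g \<noteq> [] \<and> nyl (length w') g) \<longleftrightarrow> (\<forall>g\<in>set gs. nyldon g)"
    if "2 \<le> length gs" "concat gs = w" for gs
    using length_less_concat[OF that(1)] that(2) nyl_eq_nyldon Cons
    by (metis length_Cons less_Suc_eq_le not_nyldon_Nil)
  have long: "2 \<le> length w" if gs: "2 \<le> length gs" "concat gs = w" "nyldon_factorization gs" for gs
  proof -
    obtain g where "g \<in> set gs" using gs(1) by (cases gs) auto
    moreover have "\<forall>h\<in>set gs. h \<noteq> []" using gs(3) nyldon_factorization_def by auto
    ultimately have "0 < length g" "length g < length w"
      using length_less_concat[OF gs(1)] gs(2) by auto
    then show ?thesis by linarith
  qed
  have "nyldon w \<longleftrightarrow> length w = 1 \<or> 2 \<le> length w \<and>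
      \<not> (\<exists>gs. 2 \<le> length gs \<and> concat gs = w \<and> (\<forall>g\<in>set gs. g \<noteq> [] \<and> nyl (length w') g) \<and>
           sorted_wrt lex_le gs)"
    unfolding nyldon_def sorted_wrt_lex_le_iff_nth_Suc using Cons by simp
  also have "\<dots> \<longleftrightarrow> \<not> (\<exists>gs. 2 \<le> length gs \<and> concat gs = w \<and> nyldon_factorization gs)"
  proof -
    have "length w = 1 \<longleftrightarrow> \<not> 2 \<le> length w" using Cons by (cases w') auto
    moreover have "(\<exists>gs. 2 \<le> length gs \<and> concat gs = w \<and>
        (\<forall>g\<in>set gs. g \<noteq> [] \<and> nyl (length w') g) \<and> sorted_wrt lex_le gs) \<longleftrightarrow>
      (\<exists>gs. 2 \<le> length gs \<and> concat gs = w \<and> nyldon_factorization gs)"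
      unfolding nyldon_factorization_def using factors by blast
    ultimately show ?thesis using long by blast
  qed
  finally show ?thesis using Cons by simp
qed

lemma nyldon_factorization_snoc:
  "nyldon_factorization (xs @ [y]) \<longleftrightarrow>
     nyldon_factorization xs \<and> nyldon y \<and> (xs \<noteq> [] \<longrightarrow> lex_le (last xs) y)"
proof -
  have "sorted_wrt lex_le (xs @ [y]) \<longleftrightarrow> sorted_wrt lex_le xs \<and> (xs \<noteq> [] \<longrightarrow> lex_le (last xs) y)"
    by (induct xs rule: induct_list012)
      (auto simp: sorted_wrt2[OF transp_lex_le] intro: lex_le_trans)
  then show ?thesis unfolding nyldon_factorization_def by auto
qed

lemma nyldon_factorization_exists:
  assumes "w \<noteq> []" shows "\<exists>gs. gs \<noteq> [] \<and> nyldon_factorization gs \<and> concat gs = w"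
proof (cases "nyldon w")
  case True
  then show ?thesis by (intro exI[of _ "[w]"]) (simp add: nyldon_factorization_def)
next
  case False
  then show ?thesis using assms nyldon_iff[of w] by force
qed

lemma nyldon_factorization_of_nyldon:
  "nyldon w \<Longrightarrow> nyldon_factorization gs \<Longrightarrow> concat gs = w \<Longrightarrow> gs = [w]"
  using nyldon_iff[of w] by (cases gs rule: remdups_adj.cases) auto

section \<open>Proper Nyldon suffixes are smaller\<close>

definition proper_suffixes_less :: "nat \<Rightarrow> bool" where
  "proper_suffixes_less n \<longleftrightarrow>
     (\<forall>p s. length (p @ s) \<le> n \<longrightarrow> p \<noteq> [] \<longrightarrow> nyldon (p @ s) \<longrightarrow> nyldon s \<longrightarrow> lex_less s (p @ s))"

lemma proper_suffixes_less_mono: "proper_suffixes_less n \<Longrightarrow> m \<le> n \<Longrightarrow> proper_suffixes_less m"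
  unfolding proper_suffixes_less_def by auto

lemma factorization_of_proper_suffix:
  assumes "proper_suffixes_less (length g)" "nyldon g" "g = y @ q" "y \<noteq> []" "q \<noteq> []"
  shows "\<exists>es. es \<noteq> [] \<and> nyldon_factorization es \<and> concat es = q \<and> lex_less (last es) g"
proof -
  obtain es where es: "es \<noteq> []" "nyldon_factorization es" "concat es = q"
    using nyldon_factorization_exists assms(5) by blast
  then have "g = (y @ concat (butlast es)) @ last es"
    using assms(3)
    by (metis append.assoc append_butlast_last_id concat.simps concat_append append_Nil2)
  moreover have "nyldon (last es)" using es nyldon_factorization_def by simp
  ultimately have "lex_less (last es) g"
    using assms(1,2,4) unfolding proper_suffixes_less_def by (metis Nil_is_append_conv order.refl)
  then show ?thesis using es by blast
qed

lemma nyldon_factorization_of_suffix: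
  assumes "proper_suffixes_less (length (concat gs))"
    and "gs \<noteq> []" "nyldon_factorization gs" "concat gs = x @ q" "q \<noteq> []"
  shows "\<exists>es. es \<noteq> [] \<and> nyldon_factorization es \<and> concat es = q \<and> lex_le (last es) (last gs) \<and>
           (length (last gs) < length q \<longrightarrow> 2 \<le> length es)"
  using assms
proof (induct gs arbitrary: x q rule: rev_induct)
  case Nil
  then show ?case by simp
next
  case (snoc g hs)
  have hs: "nyldon_factorization hs" and g: "nyldon g"
    and sorted: "hs \<noteq> [] \<Longrightarrow> lex_le (last hs) g"
    using snoc.prems(3) nyldon_factorization_snoc by auto
  have split: "concat hs @ g = x @ q" using snoc.prems(4) by simp
  show ?case
  proof (cases "length q \<le> length g")
    case True
    then obtain y where y: "g = y @ q" using split by (auto simp: append_eq_append_conv2)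
    have "proper_suffixes_less (length g)"
      using snoc.prems(1) proper_suffixes_less_mono by simp
    then show ?thesis
      using factorization_of_proper_suffix[OF _ g y _ snoc.prems(5)] y g True
      by (cases "y = []") (auto simp: nyldon_factorization_def lex_le_def intro: exI[of _ "[g]"])
  next
    case False
    obtain q0 where "concat hs = x @ q0 \<and> q0 @ g = q \<or> concat hs @ q0 = x \<and> g = q0 @ q"
      using split append_eq_append_conv2[of "concat hs" g x q] by blast
    then have q0: "q = q0 @ g" "concat hs = x @ q0" "q0 \<noteq> []" using False by auto
    then have "hs \<noteq> []" by auto
    moreover have "proper_suffixes_less (length (concat hs))"
      using snoc.prems(1) proper_suffixes_less_mono by simp
    ultimately obtain es where es: "es \<noteq> []" "nyldon_factorization es" "concat es = q0"
        "lex_le (last es) (last hs)"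
      using snoc.hyps hs q0 by blast
    have "nyldon_factorization (es @ [g])"
      using es g sorted \<open>hs \<noteq> []\<close> nyldon_factorization_snoc lex_le_trans by blast
    moreover have "2 \<le> length (es @ [g])" using es(1) by (cases es) auto
    ultimately show ?thesis using es q0 by (intro exI[of _ "es @ [g]"]) (simp add: lex_le_def)
  qed
qed

lemma nyldon_suffix_in_last_factor:
  assumes "proper_suffixes_less (length (concat gs))"
    and "gs \<noteq> []" "nyldon_factorization gs" "concat gs = x @ q" "nyldon q"
  shows "length q \<le> length (last gs) \<and> lex_le q (last gs)"
proof -
  obtain es where es: "nyldon_factorization es" "concat es = q" "lex_le (last es) (last gs)"
      "length (last gs) < length q \<longrightarrow> 2 \<le> length es"
    using nyldon_factorization_of_suffix[OF assms(1-4)] assms(5) by (metis not_nyldon_Nil)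
  then have "es = [q]" using nyldon_factorization_of_nyldon assms(5) by blast
  then show ?thesis using es by auto
qed

lemma last_factor_longer_than_suffix:
  assumes "proper_suffixes_less (length (d @ s))"
    and "nyldon d" "nyldon s" "lex_less s d"
    and "es \<noteq> []" "nyldon_factorization es" "concat es = d @ s"
  shows "length s < length (last es) \<and> lex_le s (last es)"
proof -
  have le: "length s \<le> length (last es)" "lex_le s (last es)"
    using nyldon_suffix_in_last_factor[of es d s] assms by auto
  obtain e0 where e0: "es = e0 @ [last es]" using assms(5) by (metis append_butlast_last_id)
  have "length s \<noteq> length (last es)"
  proof
    assume "length s = length (last es)"
    moreover have "concat e0 @ last es = d @ s" using assms(7) e0
      by (metis concat_append concat.simps append_Nil2)
    ultimately have "last es = s" "concat e0 = d" by (simp_all add: append_eq_append_conv)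
    then have "e0 = [d]"
      using nyldon_factorization_of_nyldon[OF assms(2)] assms(6) e0 nyldon_factorization_snoc
      by metis
    then have "lex_le d s" using assms(6) e0 nyldon_factorization_snoc \<open>last es = s\<close>
      by (metis last.simps not_Cons_self2)
    then show False using assms(4) not_lex_less_iff by blast
  qed
  then show ?thesis using le by simp
qed

(* A suffix s violating the claim yields a longer one: the last sorted Nyldon factor of d s,
   where d is the last factor of the prefix p. *)
lemma nyldon_suffix_descent:
  assumes "proper_suffixes_less n" "length w \<le> Suc n" "nyldon w"
    and "w = p @ s" "p \<noteq> []" "nyldon s" "lex_le w s"
  shows "\<exists>p' s'. w = p' @ s' \<and> p' \<noteq> [] \<and> nyldon s' \<and> lex_le w s' \<and> length p' < length p"
proof -
  obtain ds where ds: "ds \<noteq> []" "nyldon_factorization ds" "concat ds = p"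
    using nyldon_factorization_exists assms(5) by blast
  obtain d0 d where d0: "ds = d0 @ [d]" using ds(1) by (metis append_butlast_last_id)
  have d: "nyldon d" "nyldon_factorization d0" using ds(2) d0 nyldon_factorization_snoc by auto
  have "lex_less s d"
  proof (rule ccontr)
    assume "\<not> lex_less s d"
    then have "nyldon_factorization (ds @ [s])"
      using ds(2) d0 assms(6) nyldon_factorization_snoc[of ds s] not_lex_less_iff by simp
    moreover have "2 \<le> length (ds @ [s])" using ds(1) by (cases ds) auto
    moreover have "concat (ds @ [s]) = w" using ds assms(4) by simp
    ultimately show False using assms(3) nyldon_iff by blast
  qed
  have "d0 \<noteq> []"
  proof
    assume "d0 = []"
    then have "p = d" using ds(3) d0 by simp
    moreover have "lex_less p s"
      using lex_less_append_right[of s p] assms(4,6,7) lex_less_le_trans by (metis not_nyldon_Nil)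
    ultimately show False using \<open>lex_less s d\<close> lex_less_trans lex_less_irrefl by blast
  qed
  then have "concat d0 \<noteq> []" using d(2) nyldon_factorization_def by (cases d0) auto
  have w: "w = concat d0 @ (d @ s)" using assms(4) ds(3) d0 by simp
  then have shorter: "length (d @ s) \<le> n"
    using assms(2) \<open>concat d0 \<noteq> []\<close> by (cases "concat d0") auto
  obtain es where es: "es \<noteq> []" "nyldon_factorization es" "concat es = d @ s"
    using nyldon_factorization_exists d(1) by (metis Nil_is_append_conv not_nyldon_Nil)
  obtain e0 where e0: "es = e0 @ [last es]" using es(1) by (metis append_butlast_last_id)
  have e: "length s < length (last es)" "lex_le s (last es)"
    using last_factor_longer_than_suffix[OF proper_suffixes_less_mono[OF assms(1) shorter]
        d(1) assms(6) \<open>lex_less s d\<close> es] by auto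
  have "w = (concat d0 @ concat e0) @ last es"
    using w es(3) e0 by (metis append.assoc concat.simps concat_append append_Nil2)
  moreover have "nyldon (last es)" using es nyldon_factorization_def by simp
  moreover have "lex_le w (last es)" using assms(7) e(2) lex_le_trans by blast
  moreover have "length (concat d0 @ concat e0) < length p"
    using arg_cong[OF calculation(1), of length] assms(4) e(1) by simp
  ultimately show ?thesis using \<open>concat d0 \<noteq> []\<close> by blast
qed

lemma proper_suffixes_less_all: "proper_suffixes_less n"
proof (induct n)
  case 0
  then show ?case by (simp add: proper_suffixes_less_def)
next
  case (Suc n)
  have "\<not> lex_le w s" if "length w \<le> Suc n" "nyldon w" "w = p @ s" "p \<noteq> []" "nyldon s" for w p s
    using that
  proof (induct "length p" arbitrary: p s rule: less_induct)
    case less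
    then show ?case using nyldon_suffix_descent[OF Suc.hyps] by blast
  qed
  then show ?case unfolding proper_suffixes_less_def using not_lex_less_iff by blast
qed

theorem nyldon_proper_suffix_less: "nyldon (p @ s) \<Longrightarrow> p \<noteq> [] \<Longrightarrow> nyldon s \<Longrightarrow> lex_less s (p @ s)"
  using proper_suffixes_less_all unfolding proper_suffixes_less_def by blast

section \<open>Appending Nyldon words\<close>

definition nyldon_bounded :: "letter list \<Rightarrow> letter list \<Rightarrow> bool" where
  "nyldon_bounded w r \<longleftrightarrow> nyldon w \<and> (\<forall>p s. w = p @ s \<longrightarrow> p \<noteq> [] \<longrightarrow> nyldon s \<longrightarrow> lex_le s r)"

lemma nyldon_bounded_nyldon: "nyldon_bounded w r \<Longrightarrow> nyldon w"
  by (simp add: nyldon_bounded_def)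

lemma nyldon_bounded_mono: "nyldon_bounded w r \<Longrightarrow> lex_le r r' \<Longrightarrow> nyldon_bounded w r'"
  unfolding nyldon_bounded_def using lex_le_trans by blast

lemma nyldon_bounded_letter: "nyldon_bounded [c] r"
  unfolding nyldon_bounded_def by (auto simp: nyldon_letter Cons_eq_append_conv)

lemma not_nyldon_suffix_append:
  assumes "nyldon_bounded u r" "lex_le r v" "nyldon v" "u = p @ s" "p \<noteq> []" "s \<noteq> []"
  shows "\<not> nyldon (s @ v)"
proof -
  obtain ds where ds: "ds \<noteq> []" "nyldon_factorization ds" "concat ds = s"
    using nyldon_factorization_exists assms(6) by blast
  have "u = (p @ concat (butlast ds)) @ last ds"
    using assms(4) ds
    by (metis append.assoc append_butlast_last_id concat.simps concat_append append_Nil2)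
  moreover have "nyldon (last ds)" using ds nyldon_factorization_def by simp
  ultimately have "lex_le (last ds) v"
    using assms(1,2,5) lex_le_trans unfolding nyldon_bounded_def by blast
  then have "nyldon_factorization (ds @ [v])" using ds assms(3) nyldon_factorization_snoc by blast
  moreover have "2 \<le> length (ds @ [v])" using ds(1) by (cases ds) auto
  ultimately show ?thesis using ds(3) nyldon_iff by fastforce
qed

lemma nyldon_append:
  assumes u: "nyldon_bounded u r" and v: "nyldon v" and "lex_less v u" "lex_le r v"
  shows "nyldon (u @ v)"
proof -
  have "\<not> nyldon_factorization gs" if gs: "2 \<le> length gs" "concat gs = u @ v" for gs
  proof
    assume fact: "nyldon_factorization gs"
    obtain g0 g where g0: "gs = g0 @ [g]" using gs(1) by (cases gs rule: rev_exhaust) auto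
    then have "g0 \<noteq> []" using gs(1) by auto
    have g: "nyldon_factorization g0" "nyldon g" "lex_le (last g0) g"
      using fact g0 \<open>g0 \<noteq> []\<close> nyldon_factorization_snoc by auto
    have "length v \<le> length g"
      using nyldon_suffix_in_last_factor[OF proper_suffixes_less_all, of gs u v] fact gs v g0
      by auto
    moreover obtain y where "concat g0 = u @ y \<and> y @ g = v \<or> concat g0 @ y = u \<and> g = y @ v"
      using gs(2) g0 append_eq_append_conv2[of "concat g0" g u v] by auto
    ultimately consider "g = y @ v" "concat g0 @ y = u" "y \<noteq> []" | "g = v" "concat g0 = u"
      by fastforce
    then show False
    proof cases
      case 1
      have "concat g0 \<noteq> []" using g(1) \<open>g0 \<noteq> []\<close> nyldon_factorization_def by (cases g0) auto
      then show False using not_nyldon_suffix_append[OF u assms(4) v] 1 g(2) by metis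
    next
      case 2
      then have "g0 = [u]" using nyldon_factorization_of_nyldon u g(1) nyldon_bounded_def by blast
      then show False using g(3) 2 assms(3) not_lex_less_iff by auto
    qed
  qed
  then show ?thesis using u v nyldon_iff unfolding nyldon_bounded_def by auto
qed

lemma nyldon_bounded_append:
  assumes u: "nyldon_bounded u r" and v: "nyldon v" and "lex_less v u" "lex_le r v"
  shows "nyldon_bounded (u @ v) v"
proof -
  have "lex_le q v" if q: "u @ v = p @ q" "p \<noteq> []" "nyldon q" for p q
  proof -
    obtain y where "u = p @ y \<and> y @ v = q \<or> u @ y = p \<and> v = y @ q"
      using q(1) append_eq_append_conv2[of u v p q] by auto
    then consider "q = y @ v" "u = p @ y" "y \<noteq> []" | "v = y @ q"
      by (metis append_Nil)
    then show ?thesis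
    proof cases
      case 1
      then show ?thesis using not_nyldon_suffix_append[OF u assms(4) v] q by blast
    next
      case 2
      then show ?thesis
        using nyldon_proper_suffix_less[of y q] v q(3) unfolding lex_le_def by (cases "y = []") auto
    qed
  qed
  then show ?thesis using nyldon_append[OF assms] unfolding nyldon_bounded_def by blast
qed

section \<open>Thue-Morse words\<close>

lemma cmpl_append [simp]: "cmpl (x @ y) = cmpl x @ cmpl y"
  by (simp add: cmpl_def)

lemma cmpl_cmpl [simp]: "cmpl (cmpl x) = x"
proof -
  have "flip (flip c) = c" for c by (cases c) auto
  then show ?thesis by (simp add: cmpl_def comp_def)
qed

lemma length_cmpl [simp]: "length (cmpl x) = length x"
  by (simp add: cmpl_def)

lemma TM_ne_Nil [simp]: "TM k \<noteq> []"
  by (induct k) auto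

lemma length_TM: "length (TM k) = 2 ^ k"
  by (induct k) auto

lemma TM_add: "\<exists>v. TM (k + m) = TM k @ v"
  by (induct m) auto

lemma nth_TM: "i < length (TM k) \<Longrightarrow> TM k ! i = tm_inf i"
proof -
  assume i: "i < length (TM k)"
  obtain v where v: "TM (k + Suc i) = TM k @ v" using TM_add by blast
  obtain v' where v': "TM (k + Suc i) = TM (Suc i) @ v'" using TM_add[of "Suc i" k]
    by (auto simp: add.commute)
  have "i < length (TM (Suc i))" using trans_less_add1[OF less_exp[of i]] by (simp add: length_TM)
  then show ?thesis using i v v' unfolding tm_inf_def by (metis nth_append)
qed

lemma prefix_TM_eq_tm_inf: "TM k = u @ v \<Longrightarrow> u = map tm_inf [0..<length u]"
  by (rule nth_equalityI) (auto simp: nth_append nth_TM[of _ k, symmetric])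

(* mu2 is mu^2 for the Thue-Morse morphism mu: a -> ab, b -> ba. *)
definition mu2 :: "letter list \<Rightarrow> letter list" where
  "mu2 w = concat (map (\<lambda>c. [c, flip c, flip c, c]) w)"

lemma mu2_simps [simp]:
  "mu2 [] = []" "mu2 (c # w) = [c, flip c, flip c, c] @ mu2 w" "mu2 (x @ y) = mu2 x @ mu2 y"
  by (simp_all add: mu2_def)

lemma length_mu2: "length (mu2 w) = 4 * length w"
  by (induct w) auto

lemma funpow_mu2_Suc: "(mu2 ^^ Suc i) w = (mu2 ^^ i) (mu2 w)"
  by (simp only: funpow_Suc_right comp_def)

lemma funpow_mu2_append: "(mu2 ^^ i) (x @ y) = (mu2 ^^ i) x @ (mu2 ^^ i) y"
  by (induct i) auto

lemma length_funpow_mu2: "length ((mu2 ^^ i) w) = 4 ^ i * length w"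
  by (induct i) (auto simp: length_mu2)

lemma funpow_mu2_Cons_split: "w \<noteq> [] \<Longrightarrow> (mu2 ^^ i) (c # w) = (mu2 ^^ i) [c] @ (mu2 ^^ i) w"
  using funpow_mu2_append[of i "[c]" w] by simp

lemma funpow_mu2_Cons: "\<exists>r. (mu2 ^^ i) (c # w) = c # r"
  by (induct i) auto

lemma funpow_mu2_snoc: "\<exists>r. (mu2 ^^ i) (w @ [c]) = r @ [c]"
  by (induct i) auto

lemma funpow_mu2_letters: "(mu2 ^^ i) [A] = TM (2 * i) \<and> (mu2 ^^ i) [B] = cmpl (TM (2 * i))"
proof (induct i)
  case 0
  then show ?case by (simp add: cmpl_def)
next
  case (Suc i)
  have "(mu2 ^^ Suc i) [c] =
      (mu2 ^^ i) [c] @ (mu2 ^^ i) [flip c] @ (mu2 ^^ i) [flip c] @ (mu2 ^^ i) [c]" for c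
    by (simp only: funpow_mu2_Suc) (simp add: funpow_mu2_Cons_split)
  from this[of A] this[of B] show ?case using Suc by simp
qed

lemma butlast_funpow_mu2_append:
  assumes "x \<noteq> []" "last x = B" "y \<noteq> []"
  shows "butlast ((mu2 ^^ i) (x @ y)) = butlast ((mu2 ^^ i) x) @ B # butlast ((mu2 ^^ i) y)"
proof -
  obtain r where r: "(mu2 ^^ i) x = r @ [B]"
    using funpow_mu2_snoc[of i "butlast x" B] assms(1,2) by (metis append_butlast_last_id)
  have "(mu2 ^^ i) y \<noteq> []" using assms(3) length_funpow_mu2[of i y] by auto
  then show ?thesis using r by (simp add: funpow_mu2_append butlast_append)
qed

(* For w ending in b, rot_img i w is (mu2 ^^ i) w with its last letter b moved to the front. *)
definition rot_img :: "nat \<Rightarrow> letter list \<Rightarrow> letter list" where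
  "rot_img i w = B # butlast ((mu2 ^^ i) w)"

lemma rot_img_Suc: "rot_img (Suc i) w = rot_img i (mu2 w)"
  by (simp only: rot_img_def funpow_mu2_Suc)

lemma rot_img_append:
  "x \<noteq> [] \<Longrightarrow> last x = B \<Longrightarrow> y \<noteq> [] \<Longrightarrow> rot_img i (x @ y) = rot_img i x @ rot_img i y"
  by (simp add: rot_img_def butlast_funpow_mu2_append)

lemma rot_img_less_append:
  assumes "x \<noteq> []" "last x = B" "y \<noteq> []"
  shows "lex_less (rot_img i x) (rot_img i (x @ y))"
proof -
  have "rot_img i (x @ y) = rot_img i x @ rot_img i y" using assms by (rule rot_img_append)
  then show ?thesis by (metis lex_less_append_right list.distinct(1) rot_img_def)
qed

lemma rot_img_mismatch:
  assumes "0 < i \<or> u \<noteq> [] \<and> v \<noteq> []"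
  shows "lex_less (rot_img i (p @ A # u)) (rot_img i (p @ B # v))"
proof -
  have long: "2 \<le> length ((mu2 ^^ i) (c # w))" if "0 < i \<or> w \<noteq> []" for c w
  proof (cases i)
    case 0
    then show ?thesis using that by (cases w) auto
  next
    case (Suc j)
    have "4 \<le> (4::nat) ^ Suc j" by simp
    then show ?thesis using Suc length_funpow_mu2[of i "c # w"] by (simp del: power_Suc)
  qed
  obtain r where r: "(mu2 ^^ i) (A # u) = A # r" using funpow_mu2_Cons by blast
  obtain r' where r': "(mu2 ^^ i) (B # v) = B # r'" using funpow_mu2_Cons by blast
  have "r \<noteq> []" "r' \<noteq> []"
    using long[where c = A and w = u] long[where c = B and w = v] r r' assms by auto
  then have "rot_img i (p @ A # u) = (B # (mu2 ^^ i) p) @ A # butlast r"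
    "rot_img i (p @ B # v) = (B # (mu2 ^^ i) p) @ B # butlast r'"
    using r r' by (simp_all add: rot_img_def funpow_mu2_append butlast_append)
  then show ?thesis by simp
qed

lemma rot_img_less:
  assumes "mismatch_less x y" "0 < i \<or> mismatch_less (butlast x) (butlast y)"
  shows "lex_less (rot_img i x) (rot_img i y)"
  using assms(2)
proof
  assume "0 < i"
  then show ?thesis using assms(1) rot_img_mismatch by (elim mismatch_lessE) auto
next
  assume "mismatch_less (butlast x) (butlast y)"
  then obtain p u v where "butlast x = p @ A # u" "butlast y = p @ B # v"
    by (elim mismatch_lessE)
  then have "x = p @ A # (u @ [last x])" "y = p @ B # (v @ [last y])"
    by (metis append_butlast_last_id append_Cons append_assoc butlast.simps(1) list.distinct(1)
        self_append_conv2)+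
  then show ?thesis using rot_img_mismatch by (metis snoc_eq_iff_butlast)
qed

lemma rot_img_le_rot_img_Suc:
  "mismatch_less (butlast z) (butlast (mu2 y)) \<Longrightarrow> lex_le (rot_img k z) (rot_img (Suc k) y)"
  unfolding rot_img_Suc lex_le_def using rot_img_less mismatch_less_butlastD by blast

lemma nyldon_bounded_rot_img_append:
  assumes "nyldon_bounded (rot_img i x) r" "nyldon (rot_img i y)"
    and "lex_less (rot_img i y) (rot_img i x)" "lex_le r (rot_img i y)"
    and "x \<noteq> []" "last x = B" "y \<noteq> []"
  shows "nyldon_bounded (rot_img i (x @ y)) (rot_img i y)"
  using nyldon_bounded_append[OF assms(1-4)] assms(5-7) by (simp add: rot_img_append)

section \<open>Seed words\<close>

(* mu2 maps zU, zA, zD, zC to zA zB, zA zW, zE zW, zE zB, and zE = zA zD, zB = zU zC,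
   zV = zD zC, zW = zU zV. Along these factorizations nyldon_bounded_append lifts
   seed_bounds from one level to the next. *)
abbreviation "zU \<equiv> [A,B]"
abbreviation "zA \<equiv> [A,B,B]"
abbreviation "zB \<equiv> [A,B,A,A,B]"
abbreviation "zC \<equiv> [A,A,B]"
abbreviation "zD \<equiv> [A,A,B,B]"
abbreviation "zE \<equiv> [A,B,B,A,A,B,B]"
abbreviation "zV \<equiv> [A,A,B,B,A,A,B]"
abbreviation "zW \<equiv> [A,B,A,A,B,B,A,A,B]"

definition seed_bounds :: "nat \<Rightarrow> bool" where
  "seed_bounds k \<longleftrightarrow>
     nyldon_bounded (rot_img (Suc k) zU) (rot_img k zB) \<and>
     nyldon_bounded (rot_img (Suc k) zA) (rot_img k zW) \<and>
     nyldon_bounded (rot_img (Suc k) zD) (rot_img k zW) \<and>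
     nyldon_bounded (rot_img (Suc k) zC) (rot_img k zB)"

lemma seed_bounds_derived:
  assumes "seed_bounds k"
  shows "nyldon_bounded (rot_img (Suc k) zE) (rot_img (Suc k) zD)"
    and "nyldon_bounded (rot_img (Suc k) zB) (rot_img (Suc k) zC)"
    and "nyldon_bounded (rot_img (Suc k) zV) (rot_img (Suc k) zC)"
    and "nyldon_bounded (rot_img (Suc k) zW) (rot_img (Suc k) zV)"
proof -
  have U: "nyldon_bounded (rot_img (Suc k) zU) (rot_img k zB)"
    and A: "nyldon_bounded (rot_img (Suc k) zA) (rot_img k zW)"
    and D: "nyldon_bounded (rot_img (Suc k) zD) (rot_img k zW)"
    and C: "nyldon_bounded (rot_img (Suc k) zC) (rot_img k zB)"
    using assms unfolding seed_bounds_def by auto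
  show "nyldon_bounded (rot_img (Suc k) zE) (rot_img (Suc k) zD)"
    using nyldon_bounded_rot_img_append[OF A nyldon_bounded_nyldon[OF D] rot_img_less[of zD zA]
        rot_img_le_rot_img_Suc[of zW zD k]] by simp
  show "nyldon_bounded (rot_img (Suc k) zB) (rot_img (Suc k) zC)"
    using nyldon_bounded_rot_img_append[OF U nyldon_bounded_nyldon[OF C] rot_img_less[of zC zU]
        rot_img_le_rot_img_Suc[of zB zC k]] by simp
  show V: "nyldon_bounded (rot_img (Suc k) zV) (rot_img (Suc k) zC)"
    using nyldon_bounded_rot_img_append[OF D nyldon_bounded_nyldon[OF C]
        rot_img_less_append[of zC "[B]", simplified] rot_img_le_rot_img_Suc[of zW zC k]] by simp
  show "nyldon_bounded (rot_img (Suc k) zW) (rot_img (Suc k) zV)"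
    using nyldon_bounded_rot_img_append[OF U nyldon_bounded_nyldon[OF V] rot_img_less[of zV zU]
        rot_img_le_rot_img_Suc[of zB zV k]] by simp
qed

lemma seed_bounds_Suc:
  assumes "seed_bounds k"
  shows "seed_bounds (Suc k)"
proof -
  have A: "nyldon_bounded (rot_img (Suc k) zA) (rot_img k zW)"
    using assms unfolding seed_bounds_def by auto
  note E = seed_bounds_derived(1)[OF assms] and B = seed_bounds_derived(2)[OF assms]
    and W = seed_bounds_derived(4)[OF assms]
  have DW: "lex_le (rot_img (Suc k) zD) (rot_img (Suc k) zW)"
    and DB: "lex_le (rot_img (Suc k) zD) (rot_img (Suc k) zB)"
    using rot_img_less[of zD zW "Suc k"] rot_img_less[of zD zB "Suc k"]
    by (simp_all add: lex_le_def)
  have "nyldon_bounded (rot_img (Suc (Suc k)) zU) (rot_img (Suc k) zB)"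
    using nyldon_bounded_rot_img_append[OF A nyldon_bounded_nyldon[OF B] rot_img_less[of zB zA]
        rot_img_le_rot_img_Suc[of zW zB k]] by (simp add: rot_img_Suc[of "Suc k"])
  moreover have "nyldon_bounded (rot_img (Suc (Suc k)) zA) (rot_img (Suc k) zW)"
    using nyldon_bounded_rot_img_append[OF A nyldon_bounded_nyldon[OF W] rot_img_less[of zW zA]
        rot_img_le_rot_img_Suc[of zW zW k]] by (simp add: rot_img_Suc[of "Suc k"])
  moreover have "nyldon_bounded (rot_img (Suc (Suc k)) zD) (rot_img (Suc k) zW)"
    using nyldon_bounded_rot_img_append[OF E nyldon_bounded_nyldon[OF W] rot_img_less[of zW zE] DW]
    by (simp add: rot_img_Suc[of "Suc k"])
  moreover have "nyldon_bounded (rot_img (Suc (Suc k)) zC) (rot_img (Suc k) zB)"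
    using nyldon_bounded_rot_img_append[OF E nyldon_bounded_nyldon[OF B] rot_img_less[of zB zE] DB]
    by (simp add: rot_img_Suc[of "Suc k"])
  ultimately show ?thesis unfolding seed_bounds_def by blast
qed

lemma nyldon_bounded_BA: "nyldon_bounded [B,A] [A]"
  using nyldon_bounded_append[OF nyldon_bounded_letter[of B "[A]"] nyldon_letter[of A]]
  by (simp add: lex_le_def)

lemma nyldon_bounded_BAB: "nyldon_bounded [B,A,B] [B]"
  using nyldon_bounded_append[OF nyldon_bounded_BA nyldon_letter, of B] by (simp add: lex_le_def)

lemma nyldon_bounded_BAA: "nyldon_bounded [B,A,A] [A]"
  using nyldon_bounded_append[OF nyldon_bounded_BA nyldon_letter, of A] by (simp add: lex_le_def)

lemma nyldon_bounded_BAAB: "nyldon_bounded [B,A,A,B] [B]"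
  using nyldon_bounded_append[OF nyldon_bounded_BAA nyldon_letter, of B] by (simp add: lex_le_def)

lemma nyldon_bounded_BABBA: "nyldon_bounded [B,A,B,B,A] [B,A]"
  using nyldon_bounded_append[OF nyldon_bounded_BAB nyldon_bounded_nyldon[OF nyldon_bounded_BA]]
  by (simp add: lex_le_def)

lemma nyldon_bounded_BAABBA: "nyldon_bounded [B,A,A,B,B,A] [B,A]"
  using nyldon_bounded_append[OF nyldon_bounded_BAAB nyldon_bounded_nyldon[OF nyldon_bounded_BA]]
  by (simp add: lex_le_def)

lemma nyldon_bounded_BAABBAA: "nyldon_bounded [B,A,A,B,B,A,A] [B,A,A]"
  using nyldon_bounded_append[OF nyldon_bounded_BAAB nyldon_bounded_nyldon[OF nyldon_bounded_BAA]]
  by (simp add: lex_le_def)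

lemma nyldon_bounded_BABBAABBA: "nyldon_bounded [B,A,B,B,A,A,B,B,A] [B,A,A,B,B,A]"
  using nyldon_bounded_append[OF nyldon_bounded_BAB nyldon_bounded_nyldon[OF nyldon_bounded_BAABBA]]
  by (simp add: lex_le_def)

lemma nyldon_bounded_BAABBABAA: "nyldon_bounded [B,A,A,B,B,A,B,A,A] [B,A,A]"
  using nyldon_bounded_append[OF nyldon_bounded_BAABBA nyldon_bounded_nyldon[OF nyldon_bounded_BAA]]
  by (simp add: lex_le_def)

lemma seed_bounds_0: "seed_bounds 0"
proof -
  have "nyldon_bounded (rot_img 1 zU) (rot_img 0 zB)"
    using nyldon_bounded_mono nyldon_bounded_append[OF nyldon_bounded_BABBA
        nyldon_bounded_nyldon[OF nyldon_bounded_BAA]]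
    by (simp add: rot_img_def lex_le_def)
  moreover have "nyldon_bounded (rot_img 1 zA) (rot_img 0 zW)"
    using nyldon_bounded_mono nyldon_bounded_append[OF nyldon_bounded_BABBA
        nyldon_bounded_nyldon[OF nyldon_bounded_BAABBAA]]
    by (simp add: rot_img_def lex_le_def)
  moreover have "nyldon_bounded (rot_img 1 zD) (rot_img 0 zW)"
    using nyldon_bounded_mono nyldon_bounded_append[OF nyldon_bounded_BABBAABBA
        nyldon_bounded_nyldon[OF nyldon_bounded_BAABBAA]]
    by (simp add: rot_img_def lex_le_def)
  moreover have "nyldon_bounded (rot_img 1 zC) (rot_img 0 zB)"
    using nyldon_bounded_mono nyldon_bounded_append[OF nyldon_bounded_BAB
        nyldon_bounded_nyldon[OF nyldon_bounded_BAABBABAA]]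
    by (simp add: rot_img_def lex_le_def)
  ultimately show ?thesis unfolding seed_bounds_def by simp
qed

lemma seed_bounds_all: "seed_bounds k"
  by (induct k) (use seed_bounds_0 seed_bounds_Suc in auto)

section \<open>The factorization of the Thue-Morse word\<close>

lemma wn_eq_rot_img:
  assumes "5 \<le> n"
  shows "wn n = rot_img (n - 4) zW"
proof -
  define j where "j = n - 4"
  have n: "2 * n - 8 = 2 * j" "2 * n - 6 = 2 * Suc j" using assms j_def by auto
  let ?Y = "cmpl (TM (2 * Suc j))"
  have "(mu2 ^^ j) zW = TM (2 * j) @ ?Y @ ?Y"
    by (simp add: funpow_mu2_Cons_split funpow_mu2_letters)
  moreover have "?Y \<noteq> []" by (simp add: cmpl_def)
  ultimately have "rot_img j zW = [B] @ TM (2 * j) @ ?Y @ butlast ?Y"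
    by (simp add: rot_img_def butlast_append)
  then show ?thesis using assms n unfolding wn_def j_def by simp
qed

lemma concat_wn_eq_butlast: "concat (map wn [1..<Suc (n + 4)]) = butlast ((mu2 ^^ Suc n) zA)"
proof (induct n)
  case 0
  show ?case by (simp add: wn_def upt_rec)
next
  case (Suc n)
  have "[1..<Suc (Suc n + 4)] = [1..<Suc (n + 4)] @ [Suc n + 4]"
    using upt_Suc_append[of 1 "Suc n + 4"] by (simp del: upt_Suc)
  then have "concat (map wn [1..<Suc (Suc n + 4)]) =
      butlast ((mu2 ^^ Suc n) zA) @ rot_img (Suc n) zW"
    using Suc wn_eq_rot_img[of "Suc n + 4"] by (simp del: upt_Suc)
  also have "\<dots> = butlast ((mu2 ^^ Suc n) (zA @ zW))"
    unfolding rot_img_def by (subst butlast_funpow_mu2_append) simp_all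
  also have "\<dots> = butlast ((mu2 ^^ Suc (Suc n)) zA)"
    by (simp only: funpow_mu2_Suc[of "Suc n"]) simp
  finally show ?case .
qed

lemma concat_wn_prefix_TM: "\<exists>v. TM (2 * Suc (Suc n)) = concat (map wn [1..<Suc n]) @ v"
proof -
  have "[1..<Suc (n + 4)] = [1..<Suc n] @ [Suc n..<Suc (n + 4)]"
    using upt_add_eq_append[of 1 "Suc n" 4] by (simp del: upt_Suc)
  then obtain u where u: "butlast ((mu2 ^^ Suc n) zA) = concat (map wn [1..<Suc n]) @ u"
    by (simp only: concat_wn_eq_butlast[symmetric] map_append concat_append)
  have "TM (2 * Suc (Suc n)) = (mu2 ^^ Suc n) zA @ TM (2 * Suc n)"
    using funpow_mu2_letters[of "Suc (Suc n)", unfolded funpow_mu2_Suc[of "Suc n"]]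
      funpow_mu2_letters[of "Suc n"] funpow_mu2_append[of "Suc n" zA "[A]"] by simp
  moreover have "(mu2 ^^ Suc n) zA \<noteq> []" using length_funpow_mu2[of "Suc n" zA] by auto
  ultimately show ?thesis using u by (metis append_butlast_last_id append.assoc)
qed

lemma concat_wn_eq_tm_inf:
  "concat (map wn [1..<Suc n]) = map tm_inf [0..<length (concat (map wn [1..<Suc n]))]"
  using concat_wn_prefix_TM prefix_TM_eq_tm_inf by metis

lemma length_concat_wn: "n \<le> length (concat (map wn [1..<Suc n]))"
proof (induct n)
  case (Suc n)
  have "wn (Suc n) \<noteq> []" by (simp add: wn_def)
  then show ?case using Suc by (cases "wn (Suc n)") auto
qed simp

lemma wn_le_wn_Suc: "1 \<le> n \<Longrightarrow> lex_le (wn n) (wn (Suc n))"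
proof -
  assume "1 \<le> n"
  then consider "n = 1" | "n = 2" | "n = 3" | "n = 4" | "5 \<le> n" by linarith
  then show ?thesis
  proof cases
    case 4
    then show ?thesis using wn_eq_rot_img[of 5] by (simp add: wn_def rot_img_def lex_le_def)
  next
    case 5
    then obtain k where "n = k + 5" by (metis add.commute le_Suc_ex)
    moreover have "lex_less (rot_img (Suc k) zW) (rot_img (Suc (Suc k)) zW)"
      unfolding rot_img_Suc[of "Suc k"] by (rule rot_img_less) simp_all
    ultimately show ?thesis using wn_eq_rot_img[of n] wn_eq_rot_img[of "Suc n"]
      by (simp add: lex_le_def)
  qed (simp_all add: wn_def lex_le_def)
qed

lemma nyldon_wn: "1 \<le> n \<Longrightarrow> nyldon (wn n)"
proof -
  assume "1 \<le> n"
  then consider "n = 1" | "n = 2" | "n = 3" | "n = 4" | "5 \<le> n" by linarith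
  then show ?thesis
  proof cases
    case 3
    then show ?thesis using nyldon_bounded_nyldon[OF nyldon_bounded_BA] by (simp add: wn_def)
  next
    case 4
    then show ?thesis using nyldon_bounded_nyldon[OF nyldon_bounded_BAABBAA] by (simp add: wn_def)
  next
    case 5
    then obtain k where "n = k + 5" by (metis add.commute le_Suc_ex)
    then have "wn n = rot_img (Suc k) zW" using wn_eq_rot_img[of n] by simp
    then show ?thesis using nyldon_bounded_nyldon[OF seed_bounds_derived(4)[OF seed_bounds_all]]
      by simp
  qed (simp_all add: wn_def nyldon_letter)
qed

theorem theorem6:
  shows "(\<forall>n. concat (map wn [1..<Suc n]) = map tm_inf [0..<length (concat (map wn [1..<Suc n]))])
       \<and> (\<forall>N. \<exists>n. length (concat (map wn [1..<Suc n])) \<ge> N)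
       \<and> (\<forall>n\<ge>1. lex_le (wn n) (wn (Suc n)))
       \<and> (\<forall>n\<ge>1. nyldon (wn n))"
  using concat_wn_eq_tm_inf length_concat_wn wn_le_wn_Suc nyldon_wn by blast

end
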